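(* Let $p,l$ be distinct odd primes and let $\Gamma=\psi(\tilde\Gamma)$ be the group described in the context. Then $\Gamma$ is a CSA-group: every maximal abelian subgroup $\Gamma_0$ of $\Gamma$ is malnormal, i.e. $g\Gamma_0g^{-1}\cap\Gamma_0=\{1\}$ for all $g\in\Gamma\setminus\Gamma_0$.
   Context: Let $p,l$ be distinct odd primes. Let $\mathbb H(\mathbb Z)$ be the ring of quaternions $x=x_0+x_1i+x_2j+x_3k$ with $x_0,\dots,x_3\in\mathbb Z$, where $i^2=j^2=k^2=-1$, $ij=-ji=k$; write $|x|^2=x_0^2+x_1^2+x_2^2+x_3^2$. Fix $c_p,d_p\in\mathbb Q_p$ with $c_p^2+d_p^2+1=0$ and $c_l,d_l\in\mathbb Q_l$ with $c_l^2+d_l^2+1=0$. Define $\psi:\mathbb H(\mathbb Z)\setminus\{0\}\to G:=PGL_2(\mathbb Q_p)\times PGL_2(\mathbb Q_l)$ by sending $x$ to the class of the pair $\left(\begin{pmatrix} x_0+x_1c_p+x_3d_p & -x_1d_p+x_2+x_3c_p\\ -x_1d_p-x_2+x_3c_p & x_0-x_1c_p-x_3d_p\end{pmatrix},\begin{pmatrix} x_0+x_1c_l+x_3d_l & -x_1d_l+x_2+x_3c_l\\ -x_1d_l-x_2+x_3c_l & x_0-x_1c_l-x_3d_l\end{pmatrix}\right)$. Let $\tilde\Gamma$ be the set of $x\in\mathbb H(\mathbb Z)$ such that $|x|^2=p^rl^s$ for some integers $r,s\ge 0$, and such that $x_0$ is odd and $x_1,x_2,x_3$ are even if $|x|^2\equiv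 1\pmod 4$, while $x_1$ is even and $x_0,x_2,x_3$ are odd if $|x|^2\equiv 3\pmod 4$. Then $\Gamma=\psi(\tilde\Gamma)$ is a torsion-free cocompact lattice in $G$. *)

theory Defs
  imports "HOL-Algebra.Group" "HOL-Computational_Algebra.Computational_Algebra"
begin

definition rat_pval :: "nat \<Rightarrow> rat \<Rightarrow> int" where
  "rat_pval p q = (let (a, b) = quotient_of q in
      int (multiplicity (int p) a) - int (multiplicity (int p) b))"

definition psmall :: "nat \<Rightarrow> nat \<Rightarrow> rat \<Rightarrow> bool" where
  "psmall p k q \<longleftrightarrow> q = 0 \<or> rat_pval p q \<ge> int k"

definition pcauchy :: "nat \<Rightarrow> (nat \<Rightarrow> rat) \<Rightarrow> bool" where
  "pcauchy p X \<longleftrightarrow> (\<forall>k. \<exists>N. \<forall>m\<ge>N. \<forall>n\<ge>N. psmall p k (X m - X n))"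

definition pnull :: "nat \<Rightarrow> (nat \<Rightarrow> rat) \<Rightarrow> bool" where
  "pnull p X \<longleftrightarrow> (\<forall>k. \<exists>N. \<forall>n\<ge>N. psmall p k (X n))"

type_synonym qp = "(nat \<Rightarrow> rat) set"

definition qp_cls :: "nat \<Rightarrow> (nat \<Rightarrow> rat) \<Rightarrow> qp" where
  "qp_cls p X = {Y. pcauchy p Y \<and> pnull p (\<lambda>n. X n - Y n)}"

definition Qp :: "nat \<Rightarrow> qp set" where
  "Qp p = {qp_cls p X | X. pcauchy p X}"

definition qp_rep :: "qp \<Rightarrow> nat \<Rightarrow> rat" where
  "qp_rep a = (SOME X. X \<in> a)"

definition qp_of_int :: "nat \<Rightarrow> int \<Rightarrow> qp" where
  "qp_of_int p z = qp_cls p (\<lambda>_. of_int z)"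

definition qp_zero :: "nat \<Rightarrow> qp" where "qp_zero p = qp_of_int p 0"
definition qp_one :: "nat \<Rightarrow> qp" where "qp_one p = qp_of_int p 1"

definition qp_add :: "nat \<Rightarrow> qp \<Rightarrow> qp \<Rightarrow> qp" where
  "qp_add p a b = qp_cls p (\<lambda>n. qp_rep a n + qp_rep b n)"

definition qp_mul :: "nat \<Rightarrow> qp \<Rightarrow> qp \<Rightarrow> qp" where
  "qp_mul p a b = qp_cls p (\<lambda>n. qp_rep a n * qp_rep b n)"

definition qp_neg :: "nat \<Rightarrow> qp \<Rightarrow> qp" where
  "qp_neg p a = qp_cls p (\<lambda>n. - qp_rep a n)"

definition qp_sub :: "nat \<Rightarrow> qp \<Rightarrow> qp \<Rightarrow> qp" where
  "qp_sub p a b = qp_add p a (qp_neg p b)"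

text \<open>A matrix (a,b,c,d) stands for [[a,b],[c,d]].\<close>
type_synonym qpmat = "qp \<times> qp \<times> qp \<times> qp"

fun m2_mul :: "nat \<Rightarrow> qpmat \<Rightarrow> qpmat \<Rightarrow> qpmat" where
  "m2_mul p (a, b, c, d) (e, f, g, h) =
     (qp_add p (qp_mul p a e) (qp_mul p b g), qp_add p (qp_mul p a f) (qp_mul p b h),
      qp_add p (qp_mul p c e) (qp_mul p d g), qp_add p (qp_mul p c f) (qp_mul p d h))"

fun m2_det :: "nat \<Rightarrow> qpmat \<Rightarrow> qp" where
  "m2_det p (a, b, c, d) = qp_sub p (qp_mul p a d) (qp_mul p b c)"

fun m2_scale :: "nat \<Rightarrow> qp \<Rightarrow> qpmat \<Rightarrow> qpmat" where
  "m2_scale p t (a, b, c, d) = (qp_mul p t a, qp_mul p t b, qp_mul p t c, qp_mul p t d)"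

definition GL2 :: "nat \<Rightarrow> qpmat set" where
  "GL2 p = {(a, b, c, d). a \<in> Qp p \<and> b \<in> Qp p \<and> c \<in> Qp p \<and> d \<in> Qp p
              \<and> m2_det p (a, b, c, d) \<noteq> qp_zero p}"

definition pgl_cls :: "nat \<Rightarrow> qpmat \<Rightarrow> qpmat set" where
  "pgl_cls p M = {N \<in> GL2 p. \<exists>t\<in>Qp p. t \<noteq> qp_zero p \<and> N = m2_scale p t M}"

definition PGL2 :: "nat \<Rightarrow> qpmat set set" where
  "PGL2 p = {pgl_cls p M | M. M \<in> GL2 p}"

definition pgl_mul :: "nat \<Rightarrow> qpmat set \<Rightarrow> qpmat set \<Rightarrow> qpmat set" where
  "pgl_mul p A B = pgl_cls p (m2_mul p (SOME M. M \<in> A) (SOME M. M \<in> B))"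

definition pgl_one :: "nat \<Rightarrow> qpmat set" where
  "pgl_one p = pgl_cls p (qp_one p, qp_zero p, qp_zero p, qp_one p)"

definition G_grp :: "nat \<Rightarrow> nat \<Rightarrow> (qpmat set \<times> qpmat set) monoid" where
  "G_grp p l = \<lparr> carrier = PGL2 p \<times> PGL2 l,
                 monoid.mult = (\<lambda>(A, B) (C, D). (pgl_mul p A C, pgl_mul l B D)),
                 monoid.one = (pgl_one p, pgl_one l) \<rparr>"

text \<open>x = x0 + x1 i + x2 j + x3 k is represented as (x0, x1, x2, x3).\<close>
type_synonym quat = "int \<times> int \<times> int \<times> int"

fun qnorm :: "quat \<Rightarrow> int" where
  "qnorm (x0, x1, x2, x3) = x0^2 + x1^2 + x2^2 + x3^2"

definition tildeGamma :: "nat \<Rightarrow> nat \<Rightarrow> quat set" where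
  "tildeGamma p l = {(x0, x1, x2, x3).
      (\<exists>r s. qnorm (x0, x1, x2, x3) = int p ^ r * int l ^ s) \<and>
      (qnorm (x0, x1, x2, x3) mod 4 = 1 \<longrightarrow> odd x0 \<and> even x1 \<and> even x2 \<and> even x3) \<and>
      (qnorm (x0, x1, x2, x3) mod 4 = 3 \<longrightarrow> even x1 \<and> odd x0 \<and> odd x2 \<and> odd x3)}"

text \<open>The matrix attached to x at the prime p, with c,d in Q_p, c^2+d^2+1=0.\<close>
fun psi_mat :: "nat \<Rightarrow> qp \<Rightarrow> qp \<Rightarrow> quat \<Rightarrow> qpmat" where
  "psi_mat p c d (x0, x1, x2, x3) =
     (let X0 = qp_of_int p x0; X1 = qp_of_int p x1; X2 = qp_of_int p x2; X3 = qp_of_int p x3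
      in (qp_add p (qp_add p X0 (qp_mul p X1 c)) (qp_mul p X3 d),
          qp_add p (qp_add p (qp_neg p (qp_mul p X1 d)) X2) (qp_mul p X3 c),
          qp_add p (qp_sub p (qp_neg p (qp_mul p X1 d)) X2) (qp_mul p X3 c),
          qp_sub p (qp_sub p X0 (qp_mul p X1 c)) (qp_mul p X3 d)))"

definition psi :: "nat \<Rightarrow> nat \<Rightarrow> qp \<Rightarrow> qp \<Rightarrow> qp \<Rightarrow> qp \<Rightarrow> quat \<Rightarrow> qpmat set \<times> qpmat set" where
  "psi p l cp dp cl dl x = (pgl_cls p (psi_mat p cp dp x), pgl_cls l (psi_mat l cl dl x))"

definition Gamma_grp :: "nat \<Rightarrow> nat \<Rightarrow> qp \<Rightarrow> qp \<Rightarrow> qp \<Rightarrow> qp \<Rightarrow> (qpmat set \<times> qpmat set) monoid" where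
  "Gamma_grp p l cp dp cl dl =
     (G_grp p l) \<lparr> carrier := psi p l cp dp cl dl ` tildeGamma p l \<rparr>"

definition abelian_set :: "('a, 'b) monoid_scheme \<Rightarrow> 'a set \<Rightarrow> bool" where
  "abelian_set H A \<longleftrightarrow> (\<forall>x\<in>A. \<forall>y\<in>A. x \<otimes>\<^bsub>H\<^esub> y = y \<otimes>\<^bsub>H\<^esub> x)"

definition maximal_abelian_subgroup :: "'a set \<Rightarrow> ('a, 'b) monoid_scheme \<Rightarrow> bool" where
  "maximal_abelian_subgroup A H \<longleftrightarrow> subgroup A H \<and> abelian_set H A \<and>
     (\<forall>B. subgroup B H \<and> abelian_set H B \<and> A \<subseteq> B \<longrightarrow> B = A)"

definition malnormal :: "'a set \<Rightarrow> ('a, 'b) monoid_scheme \<Rightarrow> bool" where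
  "malnormal A H \<longleftrightarrow> (\<forall>g \<in> carrier H - A.
     {g \<otimes>\<^bsub>H\<^esub> a \<otimes>\<^bsub>H\<^esub> inv\<^bsub>H\<^esub> g | a. a \<in> A} \<inter> A = {\<one>\<^bsub>H\<^esub>})"

definition CSA_group :: "('a, 'b) monoid_scheme \<Rightarrow> bool" where
  "CSA_group H \<longleftrightarrow> (\<forall>A. maximal_abelian_subgroup A H \<longrightarrow> malnormal A H)"

end

theory Submission
  imports Defs
begin

text \<open>
  The map \<open>\<Psi>\<close> is multiplicative on integer quaternions and identifies two of them exactly when
  they are rational multiples of each other, so \<open>\<Gamma>\<close> is the monoid \<open>tildeGamma\<close> modulo real
  scalars; every element of \<open>tildeGamma\<close> has odd, hence nonzero, real part. Injectivity modulo
  scalars is visible already at the prime \<open>p\<close>: the coordinates of \<open>x\<close> can be recovered from the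
  matrix \<open>psi_mat p c d x\<close> because \<open>c\<^sup>2 + d\<^sup>2 = -1\<close>. Identities between matrices over \<open>\<rat>\<^sub>p\<close> are
  verified on rational Cauchy representatives, where this relation holds up to a null sequence.

  Two quaternions commute iff their vector parts are parallel. Hence the centralizer of a
  nontrivial element \<open>a\<close> of \<open>\<Gamma>\<close> is abelian, and a maximal abelian subgroup \<open>A \<ni> a\<close> equals it.
  If \<open>g a g\<^sup>-\<^sup>1 \<in> A\<close>, then \<open>g a g\<^sup>-\<^sup>1\<close> commutes with \<open>a\<close>; conjugation by \<open>g\<close> rotates vector parts by
  an angle different from \<open>\<pi>\<close> (as \<open>Re g \<noteq> 0\<close>), so the vector part of \<open>a\<close> lies on the axis of \<open>g\<close>,
  i.e. \<open>g\<close> commutes with \<open>a\<close> and \<open>g \<in> A\<close>.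
\<close>

section \<open>The \<open>p\<close>-adic valuation on \<open>\<rat>\<close>\<close>

locale padic =
  fixes p :: nat
  assumes prime_p: "prime p"

lemma quotient_of_cases_nonzero:
  assumes "(x::rat) \<noteq> 0"
  obtains a b where "x = of_int a / of_int b" "a \<noteq> 0" "b > 0" "quotient_of x = (a, b)"
proof -
  obtain a b where ab: "quotient_of x = (a, b)" by fastforce
  with assms show thesis
    using that quotient_of_div[OF ab] quotient_of_denom_pos[OF ab] by fastforce
qed

lemma rat_pval_uminus: "rat_pval p (- x) = rat_pval p x"
  by (simp add: rat_pval_def rat_uminus_code Let_def split_def multiplicity_uminus_right)

lemma psmall_uminus [simp]: "psmall p k (- x) \<longleftrightarrow> psmall p k x"
  by (simp add: psmall_def rat_pval_uminus)

lemma psmall_0 [simp]: "psmall p k 0"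
  by (simp add: psmall_def)

lemma psmall_mono: "psmall p k x \<Longrightarrow> k' \<le> k \<Longrightarrow> psmall p k' x"
  by (auto simp: psmall_def)

context padic
begin

lemma multiplicity_mult_int_p:
  "x \<noteq> 0 \<Longrightarrow> y \<noteq> 0 \<Longrightarrow>
     multiplicity (int p) (x * y) = multiplicity (int p) x + multiplicity (int p) y"
  using prime_p by (simp add: prime_elem_multiplicity_mult_distrib)

lemma rat_pval_of_int_divide:
  assumes "a \<noteq> 0" "b \<noteq> 0"
  shows "rat_pval p (of_int a / of_int b) =
           int (multiplicity (int p) a) - int (multiplicity (int p) b)"
proof -
  have "(of_int a / of_int b :: rat) \<noteq> 0" using assms by simp
  then obtain n d where nd: "of_int a / of_int b = (of_int n / of_int d :: rat)"
      "n \<noteq> 0" "d > 0" "quotient_of (of_int a / of_int b) = (n, d)"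
    by (rule quotient_of_cases_nonzero)
  from nd(1) have "of_int (a * d) = (of_int (n * b) :: rat)"
    using assms nd(3) by (simp add: field_simps)
  then have "a * d = n * b" by (simp only: of_int_eq_iff)
  then have "multiplicity (int p) a + multiplicity (int p) d =
               multiplicity (int p) n + multiplicity (int p) b"
    using assms nd(2,3) by (metis multiplicity_mult_int_p less_irrefl)
  then show ?thesis unfolding rat_pval_def nd(4) by simp
qed

lemma rat_pval_mult:
  assumes "x \<noteq> 0" "y \<noteq> 0"
  shows "rat_pval p (x * y) = rat_pval p x + rat_pval p y"
proof -
  obtain a b where x: "x = of_int a / of_int b" "a \<noteq> 0" "b > 0"
    using quotient_of_cases_nonzero[OF assms(1)] by metis
  obtain c d where y: "y = of_int c / of_int d" "c \<noteq> 0" "d > 0"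
    using quotient_of_cases_nonzero[OF assms(2)] by metis
  have "rat_pval p (x * y) = rat_pval p (of_int (a * c) / of_int (b * d))"
    using x y by simp
  also have "\<dots> = rat_pval p x + rat_pval p y"
    using x y by (simp add: rat_pval_of_int_divide multiplicity_mult_int_p del: of_int_mult)
  finally show ?thesis .
qed

lemma rat_pval_inverse: "rat_pval p (inverse x) = - rat_pval p x"
proof (cases "x = 0")
  case False
  have "rat_pval p (x * inverse x) = 0"
    using False rat_pval_of_int_divide[of 1 1] by simp
  then show ?thesis using False rat_pval_mult[of x "inverse x"] by simp
qed (simp add: rat_pval_def)

lemma rat_pval_add:
  assumes "x \<noteq> 0" "y \<noteq> 0" "x + y \<noteq> 0"
  shows "min (rat_pval p x) (rat_pval p y) \<le> rat_pval p (x + y)"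
proof -
  obtain a b where x: "x = of_int a / of_int b" "a \<noteq> 0" "b > 0"
    using quotient_of_cases_nonzero[OF assms(1)] by metis
  obtain c d where y: "y = of_int c / of_int d" "c \<noteq> 0" "d > 0"
    using quotient_of_cases_nonzero[OF assms(2)] by metis
  define m where "m = min (multiplicity (int p) (a * d)) (multiplicity (int p) (c * b))"
  have sum: "x + y = of_int (a * d + c * b) / of_int (b * d)"
    using x y by (simp add: field_simps)
  have nz: "a * d + c * b \<noteq> 0"
  proof
    assume "a * d + c * b = 0"
    then have "x + y = 0" unfolding sum by (simp del: of_int_add of_int_mult)
    with assms(3) show False ..
  qed
  have "int p ^ m dvd a * d" "int p ^ m dvd c * b"
    unfolding m_def by (simp_all add: multiplicity_dvd')
  then have "m \<le> multiplicity (int p) (a * d + c * b)"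
    using nz prime_p by (intro multiplicity_geI) (auto simp: prime_int_iff)
  then show ?thesis
    using x y nz unfolding sum m_def
    by (simp add: rat_pval_of_int_divide multiplicity_mult_int_p del: of_int_add of_int_mult)
qed

lemma psmall_add: "psmall p k x \<Longrightarrow> psmall p k y \<Longrightarrow> psmall p k (x + y)"
  using rat_pval_add[of x y] by (cases "x = 0 \<or> y = 0 \<or> x + y = 0") (auto simp: psmall_def)

lemma psmall_mult: "psmall p k x \<Longrightarrow> psmall p k' y \<Longrightarrow> psmall p (k + k') (x * y)"
  by (cases "x = 0 \<or> y = 0") (auto simp: psmall_def rat_pval_mult split: if_splits)

lemma psmall_mult_right_shift: "\<exists>e. \<forall>k x. psmall p (k + e) x \<longrightarrow> psmall p k (x * r)"
proof (cases "r = 0")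
  case False
  have "psmall p k (x * r)" if "psmall p (k + nat (- rat_pval p r)) x" for k x
    using that False by (cases "x = 0") (auto simp: psmall_def rat_pval_mult split: if_splits)
  then show ?thesis by blast
qed (simp add: psmall_def)

lemma psmall_divide: "\<not> psmall p k0 x \<Longrightarrow> psmall p (k + k0) z \<Longrightarrow> psmall p k (z / x)"
  by (cases "x = 0 \<or> z = 0") (auto simp: psmall_def divide_inverse rat_pval_mult rat_pval_inverse)

end

section \<open>\<open>p\<close>-adic Cauchy and null sequences\<close>

lemma pnull_iff_eventually: "pnull p X \<longleftrightarrow> (\<forall>k. \<forall>\<^sub>F n in sequentially. psmall p k (X n))"
  by (simp add: pnull_def eventually_sequentially)

lemma pcauchy_iff_eventually:
  "pcauchy p X \<longleftrightarrow>
     (\<forall>k. \<forall>\<^sub>F mn in sequentially \<times>\<^sub>F sequentially. psmall p k (X (fst mn) - X (snd mn)))"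
  unfolding pcauchy_def eventually_prod_sequentially by (simp, meson)

lemma pnull_eventually_0: "\<forall>\<^sub>F n in sequentially. X n = 0 \<Longrightarrow> pnull p X"
  unfolding pnull_iff_eventually by (auto elim: eventually_mono)

lemma pnull_const_iff [simp]: "pnull p (\<lambda>n. q) \<longleftrightarrow> q = 0"
proof
  assume "pnull p (\<lambda>n. q)"
  then have "psmall p (nat (rat_pval p q + 1)) q"
    by (auto simp: pnull_def)
  then show "q = 0" by (auto simp: psmall_def split: if_splits)
qed (simp add: pnull_def)

lemma pcauchy_const: "pcauchy p (\<lambda>n. q)"
  by (simp add: pcauchy_def)

lemma pnull_uminus [simp]: "pnull p (\<lambda>n. - X n) \<longleftrightarrow> pnull p X"
  by (simp add: pnull_def)

lemma pnull_diff_commute: "pnull p (\<lambda>n. X n - Y n) \<longleftrightarrow> pnull p (\<lambda>n. Y n - X n)"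
  using pnull_uminus[of p "\<lambda>n. X n - Y n"] by simp

lemma pcauchy_uminus: "pcauchy p X \<Longrightarrow> pcauchy p (\<lambda>n. - X n)"
  unfolding pcauchy_def minus_diff_minus psmall_uminus .

context padic
begin

lemma pnull_add:
  assumes "pnull p X" "pnull p Y"
  shows "pnull p (\<lambda>n. X n + Y n)"
  unfolding pnull_iff_eventually
proof
  fix k
  have "\<forall>\<^sub>F n in sequentially. psmall p k (X n)" "\<forall>\<^sub>F n in sequentially. psmall p k (Y n)"
    using assms by (simp_all add: pnull_iff_eventually)
  then show "\<forall>\<^sub>F n in sequentially. psmall p k (X n + Y n)"
    by eventually_elim (rule psmall_add)
qed

lemma pnull_diff: "pnull p X \<Longrightarrow> pnull p Y \<Longrightarrow> pnull p (\<lambda>n. X n - Y n)"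
  using pnull_add[of X "\<lambda>n. - Y n"] unfolding pnull_uminus diff_conv_add_uminus .

lemma pcauchy_add:
  assumes "pcauchy p X" "pcauchy p Y"
  shows "pcauchy p (\<lambda>n. X n + Y n)"
  unfolding pcauchy_iff_eventually
proof
  fix k
  have "\<forall>\<^sub>F mn in sequentially \<times>\<^sub>F sequentially. psmall p k (X (fst mn) - X (snd mn))"
       "\<forall>\<^sub>F mn in sequentially \<times>\<^sub>F sequentially. psmall p k (Y (fst mn) - Y (snd mn))"
    using assms by (simp_all add: pcauchy_iff_eventually)
  then show "\<forall>\<^sub>F mn in sequentially \<times>\<^sub>F sequentially.
               psmall p k (X (fst mn) + Y (fst mn) - (X (snd mn) + Y (snd mn)))"
    by eventually_elim (drule (1) psmall_add, simp add: algebra_simps)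
qed

lemma pcauchy_diff: "pcauchy p X \<Longrightarrow> pcauchy p Y \<Longrightarrow> pcauchy p (\<lambda>n. X n - Y n)"
  using pcauchy_add[of X "\<lambda>n. - Y n"] pcauchy_uminus[of p Y] unfolding diff_conv_add_uminus by blast

lemma pcauchy_mult_shift:
  assumes "pcauchy p Y"
  shows "\<exists>e. \<forall>\<^sub>F n in sequentially. \<forall>k x. psmall p (k + e) x \<longrightarrow> psmall p k (x * Y n)"
proof -
  obtain N where N: "\<forall>n\<ge>N. psmall p 0 (Y n - Y N)"
    using assms unfolding pcauchy_def by blast
  obtain e where e: "\<forall>k x. psmall p (k + e) x \<longrightarrow> psmall p k (x * Y N)"
    using psmall_mult_right_shift by blast
  have "psmall p k (x * Y n)" if "n \<ge> N" "psmall p (k + e) x" for n k x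
  proof -
    have "psmall p (k + e + 0) (x * (Y n - Y N))"
      using psmall_mult[OF that(2) N[rule_format, OF that(1)]] .
    then have "psmall p k (x * (Y n - Y N))"
      by (rule psmall_mono) simp
    then have "psmall p k (x * Y N + x * (Y n - Y N))"
      using e that(2) by (blast intro: psmall_add)
    then show ?thesis by (simp add: algebra_simps)
  qed
  then show ?thesis unfolding eventually_sequentially by blast
qed

lemma pnull_mult:
  assumes "pnull p X" "pcauchy p Y"
  shows "pnull p (\<lambda>n. X n * Y n)"
  unfolding pnull_iff_eventually
proof
  fix k
  obtain e where "\<forall>\<^sub>F n in sequentially. \<forall>k x. psmall p (k + e) x \<longrightarrow> psmall p k (x * Y n)"
    using pcauchy_mult_shift[OF assms(2)] by blast
  moreover have "\<forall>\<^sub>F n in sequentially. psmall p (k + e) (X n)"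
    using assms(1) by (simp add: pnull_iff_eventually)
  ultimately show "\<forall>\<^sub>F n in sequentially. psmall p k (X n * Y n)"
    by eventually_elim blast
qed

lemma pnull_mult_left: "pcauchy p Y \<Longrightarrow> pnull p X \<Longrightarrow> pnull p (\<lambda>n. Y n * X n)"
  using pnull_mult[of X Y] by (simp add: mult.commute)

lemma pcauchy_mult:
  assumes X: "pcauchy p X" and Y: "pcauchy p Y"
  shows "pcauchy p (\<lambda>n. X n * Y n)"
  unfolding pcauchy_iff_eventually
proof
  fix k
  obtain eX where eX: "\<forall>\<^sub>F n in sequentially. \<forall>k x. psmall p (k + eX) x \<longrightarrow> psmall p k (x * X n)"
    using pcauchy_mult_shift[OF X] by blast
  obtain eY where eY: "\<forall>\<^sub>F n in sequentially. \<forall>k x. psmall p (k + eY) x \<longrightarrow> psmall p k (x * Y n)"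
    using pcauchy_mult_shift[OF Y] by blast
  have "\<forall>\<^sub>F mn in sequentially \<times>\<^sub>F sequentially. psmall p (k + eY) (X (fst mn) - X (snd mn))"
       "\<forall>\<^sub>F mn in sequentially \<times>\<^sub>F sequentially. psmall p (k + eX) (Y (fst mn) - Y (snd mn))"
    using X Y by (simp_all add: pcauchy_iff_eventually)
  moreover note eventually_prodI[OF eY eX]
  ultimately show "\<forall>\<^sub>F mn in sequentially \<times>\<^sub>F sequentially.
                     psmall p k (X (fst mn) * Y (fst mn) - X (snd mn) * Y (snd mn))"
  proof eventually_elim
    case (elim mn)
    then have "psmall p k ((X (fst mn) - X (snd mn)) * Y (fst mn) +
                           (Y (fst mn) - Y (snd mn)) * X (snd mn))"
      by (intro psmall_add) blast+
    then show ?case by (simp add: algebra_simps)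
  qed
qed

lemma not_pnull_eventually_not_psmall:
  assumes "pcauchy p X" "\<not> pnull p X"
  shows "\<exists>k. \<forall>\<^sub>F n in sequentially. \<not> psmall p k (X n)"
proof -
  obtain k where k: "\<forall>N. \<exists>n\<ge>N. \<not> psmall p k (X n)"
    using assms(2) unfolding pnull_def by blast
  obtain N where N: "\<forall>m\<ge>N. \<forall>n\<ge>N. psmall p k (X m - X n)"
    using assms(1) unfolding pcauchy_def by blast
  have "\<not> psmall p k (X n)" if "n \<ge> N" for n
  proof
    assume small: "psmall p k (X n)"
    obtain m where m: "m \<ge> N" "\<not> psmall p k (X m)"
      using k by blast
    have "psmall p k (X n + (X m - X n))"
      using psmall_add[OF small N[rule_format, OF m(1) that]] .
    with m(2) show False by simp
  qed
  then show ?thesis unfolding eventually_sequentially by blast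
qed

lemma pcauchy_inverse:
  assumes "pcauchy p X" "\<not> pnull p X"
  shows "pcauchy p (\<lambda>n. inverse (X n))"
  unfolding pcauchy_iff_eventually
proof
  fix k
  obtain k0 where k0: "\<forall>\<^sub>F n in sequentially. \<not> psmall p k0 (X n)"
    using not_pnull_eventually_not_psmall[OF assms] by blast
  have "\<forall>\<^sub>F mn in sequentially \<times>\<^sub>F sequentially. psmall p (k + k0 + k0) (X (fst mn) - X (snd mn))"
    using assms(1) by (simp add: pcauchy_iff_eventually)
  moreover note eventually_prodI[OF k0 k0]
  ultimately show "\<forall>\<^sub>F mn in sequentially \<times>\<^sub>F sequentially.
                     psmall p k (inverse (X (fst mn)) - inverse (X (snd mn)))"
  proof eventually_elim
    case (elim mn)
    define x y where "x = X (fst mn)" and "y = X (snd mn)"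
    have large: "\<not> psmall p k0 x" "\<not> psmall p k0 y"
      using elim(2) unfolding x_def y_def by auto
    have "psmall p (k + k0 + k0) (y - x)"
      using elim(1) psmall_uminus[of p _ "x - y"] unfolding x_def y_def by simp
    then have "psmall p (k + k0) ((y - x) / x)"
      by (rule psmall_divide[OF large(1)])
    then have "psmall p k ((y - x) / x / y)"
      by (rule psmall_divide[OF large(2)])
    moreover have "x \<noteq> 0" "y \<noteq> 0"
      using large by auto
    ultimately show ?case
      unfolding x_def[symmetric] y_def[symmetric] by (simp add: field_simps)
  qed
qed

lemma pnull_mult_inverse_minus_1:
  assumes "pcauchy p X" "\<not> pnull p X"
  shows "pnull p (\<lambda>n. X n * inverse (X n) - 1)"
proof (rule pnull_eventually_0)
  obtain k where "\<forall>\<^sub>F n in sequentially. \<not> psmall p k (X n)"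
    using not_pnull_eventually_not_psmall[OF assms] by blast
  then show "\<forall>\<^sub>F n in sequentially. X n * inverse (X n) - 1 = 0"
    by eventually_elim (subst right_inverse, auto)
qed

lemma not_pnull_mult:
  assumes "pcauchy p X" "pcauchy p Y" "\<not> pnull p X" "\<not> pnull p Y"
  shows "\<not> pnull p (\<lambda>n. X n * Y n)"
proof
  assume "pnull p (\<lambda>n. X n * Y n)"
  then have "pnull p (\<lambda>n. (X n * Y n) * inverse (X n))"
    using pnull_mult pcauchy_inverse assms(1,3) by blast
  moreover have "pnull p (\<lambda>n. Y n * (X n * inverse (X n) - 1))"
    using pnull_mult_left[OF assms(2) pnull_mult_inverse_minus_1[OF assms(1,3)]] .
  ultimately have "pnull p (\<lambda>n. (X n * Y n) * inverse (X n) - Y n * (X n * inverse (X n) - 1))"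
    by (rule pnull_diff)
  moreover have "(\<lambda>n. (X n * Y n) * inverse (X n) - Y n * (X n * inverse (X n) - 1)) = Y"
    by (simp add: algebra_simps)
  ultimately show False using assms(4) by simp
qed

lemma pnull_lincomb:
  assumes "pnull p X" "pnull p Y" "pcauchy p U" "pcauchy p V"
    and "\<And>n. Z n = U n * X n + V n * Y n"
  shows "pnull p Z"
proof -
  have "pnull p (\<lambda>n. U n * X n + V n * Y n)"
    using assms(1-4) by (intro pnull_add pnull_mult_left)
  moreover have "Z = (\<lambda>n. U n * X n + V n * Y n)"
    using assms(5) by (rule ext)
  ultimately show ?thesis by simp
qed

lemma not_pnull_inverse:
  assumes "pcauchy p X" "\<not> pnull p X"
  shows "\<not> pnull p (\<lambda>n. inverse (X n))"
proof
  assume "pnull p (\<lambda>n. inverse (X n))"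
  then have "pnull p (\<lambda>n. X n * inverse (X n))"
    by (rule pnull_mult_left[OF assms(1)])
  from pnull_diff[OF this pnull_mult_inverse_minus_1[OF assms]] show False
    by simp
qed

end

section \<open>Arithmetic in \<open>\<rat>\<^sub>p\<close>\<close>

lemma qp_cls_in_Qp: "pcauchy p X \<Longrightarrow> qp_cls p X \<in> Qp p"
  unfolding Qp_def by blast

lemma QpE:
  assumes "a \<in> Qp p"
  obtains X where "pcauchy p X" "a = qp_cls p X"
  using assms unfolding Qp_def by blast

lemma qp_of_int_in_Qp: "qp_of_int p z \<in> Qp p"
  unfolding qp_of_int_def by (rule qp_cls_in_Qp[OF pcauchy_const])

lemma qp_one_cls: "qp_one p = qp_cls p (\<lambda>n. 1)"
  by (simp add: qp_one_def qp_of_int_def)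

context padic
begin

lemma self_in_qp_cls: "pcauchy p X \<Longrightarrow> X \<in> qp_cls p X"
  by (simp add: qp_cls_def)

lemma qp_cls_eq_iff:
  assumes "pcauchy p X" "pcauchy p Y"
  shows "qp_cls p X = qp_cls p Y \<longleftrightarrow> pnull p (\<lambda>n. X n - Y n)"
proof
  assume "qp_cls p X = qp_cls p Y"
  then have "Y \<in> qp_cls p X" using self_in_qp_cls[OF assms(2)] by simp
  then show "pnull p (\<lambda>n. X n - Y n)" unfolding qp_cls_def by simp
next
  assume XY: "pnull p (\<lambda>n. X n - Y n)"
  have "pnull p (\<lambda>n. X n - Z n) \<longleftrightarrow> pnull p (\<lambda>n. Y n - Z n)" for Z
    using pnull_diff[OF _ XY, of "\<lambda>n. X n - Z n"] pnull_add[OF _ XY, of "\<lambda>n. Y n - Z n"]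
    by auto
  then show "qp_cls p X = qp_cls p Y" unfolding qp_cls_def by blast
qed

lemma qp_rep_cls:
  assumes "pcauchy p X"
  shows "pcauchy p (qp_rep (qp_cls p X))" "pnull p (\<lambda>n. X n - qp_rep (qp_cls p X) n)"
proof -
  have "qp_rep (qp_cls p X) \<in> qp_cls p X"
    unfolding qp_rep_def using self_in_qp_cls[OF assms] by (rule someI[where P = "\<lambda>Y. Y \<in> qp_cls p X"])
  then show "pcauchy p (qp_rep (qp_cls p X))" "pnull p (\<lambda>n. X n - qp_rep (qp_cls p X) n)"
    unfolding qp_cls_def by simp_all
qed

lemma Qp_rep:
  assumes "a \<in> Qp p"
  shows "pcauchy p (qp_rep a)" "qp_cls p (qp_rep a) = a"
proof -
  obtain X where X: "pcauchy p X" "a = qp_cls p X"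
    using assms by (rule QpE)
  then show "pcauchy p (qp_rep a)" using qp_rep_cls by simp
  with X show "qp_cls p (qp_rep a) = a"
    using qp_cls_eq_iff qp_rep_cls pnull_diff_commute by metis
qed

lemma qp_add_cls:
  assumes "pcauchy p X" "pcauchy p Y"
  shows "qp_add p (qp_cls p X) (qp_cls p Y) = qp_cls p (\<lambda>n. X n + Y n)"
proof -
  define R S where "R = qp_rep (qp_cls p X)" and "S = qp_rep (qp_cls p Y)"
  have "pnull p (\<lambda>n. (X n - R n) + (Y n - S n))"
    using assms by (intro pnull_add) (simp_all add: qp_rep_cls R_def S_def)
  then have "pnull p (\<lambda>n. (X n + Y n) - (R n + S n))"
    by (simp add: algebra_simps)
  then have "qp_cls p (\<lambda>n. X n + Y n) = qp_cls p (\<lambda>n. R n + S n)"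
    using assms by (subst qp_cls_eq_iff) (simp_all add: pcauchy_add qp_rep_cls R_def S_def)
  then show ?thesis
    unfolding qp_add_def R_def[symmetric] S_def[symmetric] by simp
qed

lemma qp_mul_cls:
  assumes "pcauchy p X" "pcauchy p Y"
  shows "qp_mul p (qp_cls p X) (qp_cls p Y) = qp_cls p (\<lambda>n. X n * Y n)"
proof -
  define R S where "R = qp_rep (qp_cls p X)" and "S = qp_rep (qp_cls p Y)"
  have R: "pcauchy p R" "pnull p (\<lambda>n. X n - R n)" and S: "pcauchy p S" "pnull p (\<lambda>n. Y n - S n)"
    using assms by (simp_all add: qp_rep_cls R_def S_def)
  have "pnull p (\<lambda>n. R n * (Y n - S n) + (X n - R n) * Y n)"
    by (intro pnull_add pnull_mult_left[OF R(1) S(2)] pnull_mult[OF R(2) assms(2)])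
  then have "pnull p (\<lambda>n. X n * Y n - R n * S n)"
    by (simp add: algebra_simps)
  then have "qp_cls p (\<lambda>n. X n * Y n) = qp_cls p (\<lambda>n. R n * S n)"
    by (subst qp_cls_eq_iff) (simp_all add: pcauchy_mult R S assms)
  then show ?thesis
    unfolding qp_mul_def R_def[symmetric] S_def[symmetric] by simp
qed

lemma qp_neg_cls:
  assumes "pcauchy p X"
  shows "qp_neg p (qp_cls p X) = qp_cls p (\<lambda>n. - X n)"
proof -
  define R where "R = qp_rep (qp_cls p X)"
  have R: "pcauchy p R" "pnull p (\<lambda>n. X n - R n)"
    using assms by (simp_all add: qp_rep_cls R_def)
  then have "pnull p (\<lambda>n. - R n - - X n)"
    by simp
  then show ?thesis
    unfolding qp_neg_def R_def[symmetric]
    by (subst qp_cls_eq_iff) (simp_all add: pcauchy_uminus R assms)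
qed

lemma qp_sub_cls:
  assumes "pcauchy p X" "pcauchy p Y"
  shows "qp_sub p (qp_cls p X) (qp_cls p Y) = qp_cls p (\<lambda>n. X n - Y n)"
  using assms by (simp add: qp_sub_def qp_neg_cls qp_add_cls pcauchy_uminus)

lemma qp_cls_eq_zero_iff: "pcauchy p X \<Longrightarrow> qp_cls p X = qp_zero p \<longleftrightarrow> pnull p X"
  unfolding qp_zero_def qp_of_int_def by (simp add: qp_cls_eq_iff pcauchy_const)

lemma qp_of_int_eq_iff [simp]: "qp_of_int p z = qp_of_int p w \<longleftrightarrow> z = w"
  unfolding qp_of_int_def by (simp add: qp_cls_eq_iff pcauchy_const flip: of_int_diff)

lemma qp_of_int_eq_zero_iff [simp]: "qp_of_int p z = qp_zero p \<longleftrightarrow> z = 0"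
  unfolding qp_zero_def by simp

lemma qp_mul_in_Qp: "a \<in> Qp p \<Longrightarrow> b \<in> Qp p \<Longrightarrow> qp_mul p a b \<in> Qp p"
  by (elim QpE) (simp add: qp_mul_cls qp_cls_in_Qp pcauchy_mult)

lemma qp_mul_assoc:
  "a \<in> Qp p \<Longrightarrow> b \<in> Qp p \<Longrightarrow> c \<in> Qp p \<Longrightarrow>
     qp_mul p (qp_mul p a b) c = qp_mul p a (qp_mul p b c)"
  by (elim QpE) (simp add: qp_mul_cls pcauchy_mult mult.assoc)

lemma qp_mul_one_left: "a \<in> Qp p \<Longrightarrow> qp_mul p (qp_one p) a = a"
  by (elim QpE) (simp add: qp_one_cls qp_mul_cls pcauchy_const)

lemma qp_mul_neq_zero:
  assumes "a \<in> Qp p" "b \<in> Qp p" "a \<noteq> qp_zero p" "b \<noteq> qp_zero p"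
  shows "qp_mul p a b \<noteq> qp_zero p"
  using assms
  by (elim QpE) (simp add: qp_mul_cls qp_cls_eq_zero_iff pcauchy_mult not_pnull_mult)

lemma qp_inverse_ex:
  assumes "a \<in> Qp p" "a \<noteq> qp_zero p"
  shows "\<exists>b\<in>Qp p. b \<noteq> qp_zero p \<and> qp_mul p b a = qp_one p"
proof -
  obtain X where X: "pcauchy p X" "a = qp_cls p X"
    using assms(1) by (rule QpE)
  with assms(2) have X_nonnull: "\<not> pnull p X"
    by (simp add: qp_cls_eq_zero_iff)
  define Y where "Y = (\<lambda>n. inverse (X n))"
  have Y: "pcauchy p Y" "\<not> pnull p Y"
    unfolding Y_def using X(1) X_nonnull
    by (simp_all add: pcauchy_inverse not_pnull_inverse)
  have "pnull p (\<lambda>n. Y n * X n - 1)"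
    using pnull_mult_inverse_minus_1[OF X(1) X_nonnull] by (simp add: Y_def mult.commute)
  then have "qp_mul p (qp_cls p Y) a = qp_one p"
    unfolding X(2) qp_one_cls qp_mul_cls[OF Y(1) X(1)]
    by (subst qp_cls_eq_iff) (simp_all add: pcauchy_mult pcauchy_const X(1) Y(1))
  moreover have "qp_cls p Y \<in> Qp p" "qp_cls p Y \<noteq> qp_zero p"
    using Y by (simp_all add: qp_cls_in_Qp qp_cls_eq_zero_iff)
  ultimately show ?thesis by blast
qed

end

section \<open>Matrices over \<open>\<rat>\<^sub>p\<close> and \<open>PGL\<^sub>2\<close>\<close>

abbreviation M2 :: "nat \<Rightarrow> qpmat set" where
  "M2 p \<equiv> Qp p \<times> Qp p \<times> Qp p \<times> Qp p"

type_synonym smat = "(nat \<Rightarrow> rat) \<times> (nat \<Rightarrow> rat) \<times> (nat \<Rightarrow> rat) \<times> (nat \<Rightarrow> rat)"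

fun smat_cls :: "nat \<Rightarrow> smat \<Rightarrow> qpmat" where
  "smat_cls p (A, B, C, D) = (qp_cls p A, qp_cls p B, qp_cls p C, qp_cls p D)"

fun smat_cauchy :: "nat \<Rightarrow> smat \<Rightarrow> bool" where
  "smat_cauchy p (A, B, C, D) \<longleftrightarrow> pcauchy p A \<and> pcauchy p B \<and> pcauchy p C \<and> pcauchy p D"

fun smat_equiv :: "nat \<Rightarrow> smat \<Rightarrow> smat \<Rightarrow> bool" where
  "smat_equiv p (A, B, C, D) (A', B', C', D') \<longleftrightarrow>
     pnull p (\<lambda>n. A n - A' n) \<and> pnull p (\<lambda>n. B n - B' n) \<and>
     pnull p (\<lambda>n. C n - C' n) \<and> pnull p (\<lambda>n. D n - D' n)"

fun smat_mul :: "smat \<Rightarrow> smat \<Rightarrow> smat" where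
  "smat_mul (A, B, C, D) (A', B', C', D') =
     (\<lambda>n. A n * A' n + B n * C' n, \<lambda>n. A n * B' n + B n * D' n,
      \<lambda>n. C n * A' n + D n * C' n, \<lambda>n. C n * B' n + D n * D' n)"

fun smat_scale :: "(nat \<Rightarrow> rat) \<Rightarrow> smat \<Rightarrow> smat" where
  "smat_scale T (A, B, C, D) = (\<lambda>n. T n * A n, \<lambda>n. T n * B n, \<lambda>n. T n * C n, \<lambda>n. T n * D n)"

fun smat_det :: "smat \<Rightarrow> nat \<Rightarrow> rat" where
  "smat_det (A, B, C, D) = (\<lambda>n. A n * D n - B n * C n)"

lemma smat_cls_in_M2: "smat_cauchy p M \<Longrightarrow> smat_cls p M \<in> M2 p"
  by (cases M) (simp add: qp_cls_in_Qp)

lemma GL2_subset_M2: "GL2 p \<subseteq> M2 p"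
  by (auto simp: GL2_def)

context padic
begin

lemma M2E:
  assumes "X \<in> M2 p"
  obtains M where "smat_cauchy p M" "X = smat_cls p M"
proof -
  obtain a b c d where "X = (a, b, c, d)" "a \<in> Qp p" "b \<in> Qp p" "c \<in> Qp p" "d \<in> Qp p"
    using assms by auto
  then show thesis
    using that[of "(qp_rep a, qp_rep b, qp_rep c, qp_rep d)"] by (simp add: Qp_rep)
qed

lemma smat_cauchy_mul: "smat_cauchy p M \<Longrightarrow> smat_cauchy p N \<Longrightarrow> smat_cauchy p (smat_mul M N)"
  by (cases M, cases N) (auto intro!: pcauchy_add pcauchy_mult)

lemma smat_cauchy_scale: "pcauchy p T \<Longrightarrow> smat_cauchy p M \<Longrightarrow> smat_cauchy p (smat_scale T M)"
  by (cases M) (auto intro!: pcauchy_mult)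

lemma pcauchy_smat_det: "smat_cauchy p M \<Longrightarrow> pcauchy p (smat_det M)"
  by (cases M) (simp add: pcauchy_mult pcauchy_diff)

lemma m2_mul_smat_cls:
  "smat_cauchy p M \<Longrightarrow> smat_cauchy p N \<Longrightarrow>
     m2_mul p (smat_cls p M) (smat_cls p N) = smat_cls p (smat_mul M N)"
  by (cases M, cases N) (simp add: qp_mul_cls qp_add_cls pcauchy_mult)

lemma m2_scale_smat_cls:
  "pcauchy p T \<Longrightarrow> smat_cauchy p M \<Longrightarrow>
     m2_scale p (qp_cls p T) (smat_cls p M) = smat_cls p (smat_scale T M)"
  by (cases M) (simp add: qp_mul_cls)

lemma m2_det_smat_cls: "smat_cauchy p M \<Longrightarrow> m2_det p (smat_cls p M) = qp_cls p (smat_det M)"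
  by (cases M) (simp add: qp_mul_cls qp_sub_cls pcauchy_mult)

lemma smat_cls_eq_iff:
  "smat_cauchy p M \<Longrightarrow> smat_cauchy p N \<Longrightarrow> smat_cls p M = smat_cls p N \<longleftrightarrow> smat_equiv p M N"
  by (cases M, cases N) (simp add: qp_cls_eq_iff)

lemma smat_cls_in_GL2_iff:
  assumes "smat_cauchy p M"
  shows "smat_cls p M \<in> GL2 p \<longleftrightarrow> \<not> pnull p (smat_det M)"
proof -
  have "smat_cls p M \<in> GL2 p \<longleftrightarrow> m2_det p (smat_cls p M) \<noteq> qp_zero p"
    using smat_cls_in_M2[OF assms] by (cases "smat_cls p M") (simp add: GL2_def del: m2_det.simps)
  also have "\<dots> \<longleftrightarrow> \<not> pnull p (smat_det M)"
    using assms by (simp add: m2_det_smat_cls qp_cls_eq_zero_iff pcauchy_smat_det)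
  finally show ?thesis .
qed

lemma m2_mul_m2_scale:
  assumes "s \<in> Qp p" "t \<in> Qp p"
    and "X \<in> M2 p" "Y \<in> M2 p"
  shows "m2_mul p (m2_scale p s X) (m2_scale p t Y) = m2_scale p (qp_mul p s t) (m2_mul p X Y)"
proof -
  obtain S T where ST: "pcauchy p S" "s = qp_cls p S" "pcauchy p T" "t = qp_cls p T"
    using QpE[OF assms(1)] QpE[OF assms(2)] by metis
  obtain M N where MN: "smat_cauchy p M" "X = smat_cls p M" "smat_cauchy p N" "Y = smat_cls p N"
    using M2E[OF assms(3)] M2E[OF assms(4)] by metis
  have "smat_mul (smat_scale S M) (smat_scale T N) = smat_scale (\<lambda>n. S n * T n) (smat_mul M N)"
    by (cases M, cases N) (simp add: algebra_simps)
  then show ?thesis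
    using ST MN by (simp add: m2_scale_smat_cls m2_mul_smat_cls qp_mul_cls
        smat_cauchy_scale smat_cauchy_mul pcauchy_mult)
qed

lemma GL2_mul:
  assumes "X \<in> GL2 p" "Y \<in> GL2 p"
  shows "m2_mul p X Y \<in> GL2 p"
proof -
  have "X \<in> M2 p" "Y \<in> M2 p"
    using assms GL2_subset_M2 by blast+
  then obtain M N where MN: "smat_cauchy p M" "X = smat_cls p M" "smat_cauchy p N" "Y = smat_cls p N"
    by (metis M2E)
  have "smat_det (smat_mul M N) = (\<lambda>n. smat_det M n * smat_det N n)"
    by (cases M, cases N) (simp add: algebra_simps)
  moreover have "\<not> pnull p (\<lambda>n. smat_det M n * smat_det N n)"
    using assms MN by (intro not_pnull_mult) (simp_all add: pcauchy_smat_det smat_cls_in_GL2_iff)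
  ultimately show ?thesis
    using MN by (simp add: m2_mul_smat_cls smat_cls_in_GL2_iff smat_cauchy_mul)
qed

lemma m2_scale_in_M2:
  "t \<in> Qp p \<Longrightarrow> X \<in> M2 p \<Longrightarrow> m2_scale p t X \<in> M2 p"
  by (cases X) (simp add: qp_mul_in_Qp)

lemma m2_scale_one: "X \<in> M2 p \<Longrightarrow> m2_scale p (qp_one p) X = X"
  by (cases X) (simp add: qp_mul_one_left)

lemma m2_scale_m2_scale:
  "s \<in> Qp p \<Longrightarrow> t \<in> Qp p \<Longrightarrow> X \<in> M2 p \<Longrightarrow>
     m2_scale p s (m2_scale p t X) = m2_scale p (qp_mul p s t) X"
  by (cases X) (simp add: qp_mul_assoc)

lemma pgl_cls_self:
  assumes "X \<in> GL2 p"
  shows "X \<in> pgl_cls p X"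
proof -
  have "X \<in> M2 p"
    using assms GL2_subset_M2 by blast
  then have "X = m2_scale p (qp_one p) X"
    by (simp add: m2_scale_one)
  moreover have "qp_one p \<in> Qp p" "qp_one p \<noteq> qp_zero p"
    by (simp_all add: qp_one_def qp_of_int_in_Qp qp_of_int_eq_zero_iff)
  ultimately show ?thesis
    using assms unfolding pgl_cls_def by blast
qed

lemma pgl_cls_scale:
  assumes t: "t \<in> Qp p" "t \<noteq> qp_zero p" and X: "X \<in> GL2 p"
  shows "pgl_cls p (m2_scale p t X) = pgl_cls p X"
proof -
  have X_M2: "X \<in> M2 p"
    using X GL2_subset_M2 by blast
  obtain u where u: "u \<in> Qp p" "u \<noteq> qp_zero p" "qp_mul p u t = qp_one p"
    using qp_inverse_ex[OF t] by blast
  show ?thesis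
  proof (intro Set.set_eqI iffI)
    fix N
    assume "N \<in> pgl_cls p (m2_scale p t X)"
    then obtain s where s: "N \<in> GL2 p" "s \<in> Qp p" "s \<noteq> qp_zero p" "N = m2_scale p s (m2_scale p t X)"
      unfolding pgl_cls_def by blast
    then have "N = m2_scale p (qp_mul p s t) X"
      using t X_M2 by (simp add: m2_scale_m2_scale)
    moreover have "qp_mul p s t \<in> Qp p" "qp_mul p s t \<noteq> qp_zero p"
      using s t by (simp_all add: qp_mul_in_Qp qp_mul_neq_zero)
    ultimately show "N \<in> pgl_cls p X"
      using s(1) unfolding pgl_cls_def by blast
  next
    fix N
    assume "N \<in> pgl_cls p X"
    then obtain s where s: "N \<in> GL2 p" "s \<in> Qp p" "s \<noteq> qp_zero p" "N = m2_scale p s X"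
      unfolding pgl_cls_def by blast
    have "m2_scale p u (m2_scale p t X) = X"
      using u t X_M2 by (simp add: m2_scale_m2_scale m2_scale_one)
    then have "N = m2_scale p (qp_mul p s u) (m2_scale p t X)"
      using s u t X_M2 by (simp add: m2_scale_in_M2 flip: m2_scale_m2_scale)
    moreover have "qp_mul p s u \<in> Qp p" "qp_mul p s u \<noteq> qp_zero p"
      using s u by (simp_all add: qp_mul_in_Qp qp_mul_neq_zero)
    ultimately show "N \<in> pgl_cls p (m2_scale p t X)"
      using s(1) unfolding pgl_cls_def by blast
  qed
qed

lemma pgl_mul_cls:
  assumes X: "X \<in> GL2 p" and Y: "Y \<in> GL2 p"
  shows "pgl_mul p (pgl_cls p X) (pgl_cls p Y) = pgl_cls p (m2_mul p X Y)"
proof -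
  have "(SOME M. M \<in> pgl_cls p X) \<in> pgl_cls p X" "(SOME M. M \<in> pgl_cls p Y) \<in> pgl_cls p Y"
    using pgl_cls_self[OF X] pgl_cls_self[OF Y] by (metis someI)+
  then obtain s t where st: "s \<in> Qp p" "s \<noteq> qp_zero p" "(SOME M. M \<in> pgl_cls p X) = m2_scale p s X"
    "t \<in> Qp p" "t \<noteq> qp_zero p" "(SOME M. M \<in> pgl_cls p Y) = m2_scale p t Y"
    unfolding pgl_cls_def by blast
  have "X \<in> M2 p" "Y \<in> M2 p"
    using X Y GL2_subset_M2 by blast+
  then have "m2_mul p (m2_scale p s X) (m2_scale p t Y) = m2_scale p (qp_mul p s t) (m2_mul p X Y)"
    using st by (intro m2_mul_m2_scale) simp_all
  then have "pgl_mul p (pgl_cls p X) (pgl_cls p Y) = pgl_cls p (m2_scale p (qp_mul p s t) (m2_mul p X Y))"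
    unfolding pgl_mul_def st(3,6) by simp
  also have "\<dots> = pgl_cls p (m2_mul p X Y)"
    using st X Y by (simp add: pgl_cls_scale qp_mul_in_Qp qp_mul_neq_zero GL2_mul)
  finally show ?thesis .
qed

lemma pgl_cls_eqD:
  assumes "X \<in> GL2 p" "pgl_cls p X = pgl_cls p Y"
  obtains t where "t \<in> Qp p" "t \<noteq> qp_zero p" "X = m2_scale p t Y"
  using pgl_cls_self[OF assms(1)] assms(2) unfolding pgl_cls_def by blast

end

section \<open>Integer quaternions\<close>

fun qmult :: "quat \<Rightarrow> quat \<Rightarrow> quat" where
  "qmult (a0, a1, a2, a3) (b0, b1, b2, b3) =
     (a0*b0 - a1*b1 - a2*b2 - a3*b3, a0*b1 + a1*b0 + a2*b3 - a3*b2,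
      a0*b2 - a1*b3 + a2*b0 + a3*b1, a0*b3 + a1*b2 - a2*b1 + a3*b0)"

fun qcnj :: "quat \<Rightarrow> quat" where
  "qcnj (x0, x1, x2, x3) = (x0, - x1, - x2, - x3)"

fun qre :: "quat \<Rightarrow> int" where
  "qre (x0, x1, x2, x3) = x0"

text \<open>For quaternions with nonzero real parts this says that \<open>x\<close> and \<open>y\<close> are rational multiples
  of each other, i.e. that they have the same image in \<open>PGL\<^sub>2\<close>.\<close>
fun qproportional :: "quat \<Rightarrow> quat \<Rightarrow> bool" where
  "qproportional (x0, x1, x2, x3) (y0, y1, y2, y3) \<longleftrightarrow>
     y0 * x1 = x0 * y1 \<and> y0 * x2 = x0 * y2 \<and> y0 * x3 = x0 * y3"

fun qscale :: "int \<Rightarrow> quat \<Rightarrow> quat" where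
  "qscale m (x0, x1, x2, x3) = (m * x0, m * x1, m * x2, m * x3)"

lemma qscale_qre_if_qproportional: "qproportional x y \<Longrightarrow> qscale (qre y) x = qscale (qre x) y"
  by (cases x, cases y) (simp add: mult.commute)

lemma qmult_assoc: "qmult (qmult x y) z = qmult x (qmult y z)"
  by (cases x, cases y, cases z) (simp add: algebra_simps)

lemma qnorm_qmult: "qnorm (qmult x y) = qnorm x * qnorm y"
  by (cases x, cases y) (simp add: algebra_simps power2_eq_square)

lemma qmult_qcnj: "qmult x (qcnj x) = (qnorm x, 0, 0, 0)" "qmult (qcnj x) x = (qnorm x, 0, 0, 0)"
  by (cases x, simp add: algebra_simps power2_eq_square)+

lemma qmult_one: "qmult x (1, 0, 0, 0) = x" "qmult (1, 0, 0, 0) x = x"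
  by (cases x, simp)+

lemma qre_qmult_commute: "qre (qmult x y) = qre (qmult y x)"
  by (cases x, cases y) (simp add: algebra_simps)

lemma qnorm_neq_zero: "qre x \<noteq> 0 \<Longrightarrow> qnorm x \<noteq> 0"
  by (cases x) (simp add: add_nonneg_eq_0_iff)

lemma qproportional_refl: "qproportional x x"
  by (cases x) (simp add: mult.commute)

lemma qproportional_imp_eq: "qproportional x y \<Longrightarrow> qre x = qre y \<Longrightarrow> qre x \<noteq> 0 \<Longrightarrow> x = y"
  by (cases x, cases y) auto

lemma sum_three_squares_eq_zero: "(x::int) * x + y * y + z * z = 0 \<Longrightarrow> x = 0 \<and> y = 0 \<and> z = 0"
  by (smt (verit) mult_eq_0_iff zero_le_square)

lemma qmult_commute_iff:
  "qmult (x0, x1, x2, x3) (y0, y1, y2, y3) = qmult (y0, y1, y2, y3) (x0, x1, x2, x3) \<longleftrightarrow>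
     x2 * y3 = x3 * y2 \<and> x3 * y1 = x1 * y3 \<and> x1 * y2 = x2 * y1"
  by (auto simp: algebra_simps)

text \<open>Quaternions commuting with \<open>a\<close> have vector parts parallel to that of \<open>a\<close>.\<close>
lemma qmult_commute_trans:
  assumes "qmult z a = qmult a z" "qmult w a = qmult a w"
    and "a = (a0, u1, u2, u3)" "(u1, u2, u3) \<noteq> (0, 0, 0)"
  shows "qmult z w = qmult w z"
proof -
  obtain z0 z1 z2 z3 where z: "z = (z0, z1, z2, z3)" by (cases z)
  obtain w0 w1 w2 w3 where w: "w = (w0, w1, w2, w3)" by (cases w)
  have zu: "z2*u3 = z3*u2" "z3*u1 = z1*u3" "z1*u2 = z2*u1"
    using assms(1) unfolding z assms(3) qmult_commute_iff by simp_all
  have wu: "w2*u3 = w3*u2" "w3*u1 = w1*u3" "w1*u2 = w2*u1"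
    using assms(2) unfolding w assms(3) qmult_commute_iff by simp_all
  define U where "U = u1*u1 + u2*u2 + u3*u3"
  have "U \<noteq> 0"
    using assms(4) sum_three_squares_eq_zero unfolding U_def by blast
  moreover have "U * U * (z2*w3 - z3*w2) = 0" "U * U * (z3*w1 - z1*w3) = 0"
    "U * U * (z1*w2 - z2*w1) = 0"
    using zu wu unfolding U_def by algebra+
  ultimately show ?thesis
    unfolding z w qmult_commute_iff by simp
qed

text \<open>Conjugation by \<open>g\<close> acts on vector parts as a rotation (up to scaling); a rotation with
  \<open>qre g \<noteq> 0\<close> has angle different from \<open>\<pi>\<close>, so it maps a vector to a parallel one only if the vector
  lies on its axis.\<close>
lemma qmult_commute_if_conj_commute:
  assumes "qmult (qmult (qmult g a) (qcnj g)) a = qmult a (qmult (qmult g a) (qcnj g))"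
    and "qre g \<noteq> 0"
  shows "qmult g a = qmult a g"
proof -
  obtain s v1 v2 v3 where g: "g = (s, v1, v2, v3)" by (cases g)
  obtain a0 u1 u2 u3 where a: "a = (a0, u1, u2, u3)" by (cases a)
  obtain b0 b1 b2 b3 where b: "qmult (qmult g a) (qcnj g) = (b0, b1, b2, b3)"
    by (cases "qmult (qmult g a) (qcnj g)")
  define d1 d2 d3 where "d1 = v2*u3 - v3*u2" and "d2 = v3*u1 - v1*u3" and "d3 = v1*u2 - v2*u1"
  have "qmult (b0, b1, b2, b3) a = qmult a (b0, b1, b2, b3)"
    using assms(1) unfolding b .
  then have bu: "b2*u3 = b3*u2" "b3*u1 = b1*u3" "b1*u2 = b2*u1"
    unfolding a qmult_commute_iff by simp_all
  have "b1 = (s*s - v1*v1 - v2*v2 - v3*v3)*u1 + 2*s*d1 + 2*(v1*u1 + v2*u2 + v3*u3)*v1"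
       "b2 = (s*s - v1*v1 - v2*v2 - v3*v3)*u2 + 2*s*d2 + 2*(v1*u1 + v2*u2 + v3*u3)*v2"
       "b3 = (s*s - v1*v1 - v2*v2 - v3*v3)*u3 + 2*s*d3 + 2*(v1*u1 + v2*u2 + v3*u3)*v3"
    using b unfolding g a d1_def d2_def d3_def by (simp_all add: algebra_simps)
  then have "v1*(b2*u3 - b3*u2) + v2*(b3*u1 - b1*u3) + v3*(b1*u2 - b2*u1) =
               -2*s*(d1*d1 + d2*d2 + d3*d3)"
    unfolding d1_def d2_def d3_def by algebra
  then have "d1*d1 + d2*d2 + d3*d3 = 0"
    using bu assms(2) g by simp
  then have "d1 = 0 \<and> d2 = 0 \<and> d3 = 0"
    by (rule sum_three_squares_eq_zero)
  then show ?thesis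
    unfolding g a qmult_commute_iff d1_def d2_def d3_def by simp
qed

lemma qnorm_tildeGamma: "x \<in> tildeGamma p l \<Longrightarrow> \<exists>r s. qnorm x = int p ^ r * int l ^ s"
  unfolding tildeGamma_def by (cases x) auto

lemma one_in_tildeGamma: "(1, 0, 0, 0) \<in> tildeGamma p l"
  unfolding tildeGamma_def by simp (metis power_0 mult_1)

lemma qcnj_in_tildeGamma: "x \<in> tildeGamma p l \<Longrightarrow> qcnj x \<in> tildeGamma p l"
  unfolding tildeGamma_def by (cases x) auto

locale odd_moduli =
  fixes p l :: nat
  assumes odd_p: "odd p" and odd_l: "odd l"
begin

lemma odd_qnorm_tildeGamma: "x \<in> tildeGamma p l \<Longrightarrow> odd (qnorm x)"
  using qnorm_tildeGamma odd_p odd_l by fastforce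

lemma tildeGamma_parity:
  assumes "(x0, x1, x2, x3) \<in> tildeGamma p l"
  shows "qnorm (x0, x1, x2, x3) mod 4 = 1 \<and> odd x0 \<and> even x1 \<and> even x2 \<and> even x3 \<or>
         qnorm (x0, x1, x2, x3) mod 4 = 3 \<and> odd x0 \<and> even x1 \<and> odd x2 \<and> odd x3"
proof -
  have "qnorm (x0, x1, x2, x3) mod 4 = 1 \<or> qnorm (x0, x1, x2, x3) mod 4 = 3"
    using odd_qnorm_tildeGamma[OF assms] by presburger
  with assms show ?thesis
    unfolding tildeGamma_def by auto
qed

lemma qre_tildeGamma_neq_zero: "x \<in> tildeGamma p l \<Longrightarrow> qre x \<noteq> 0"
  using tildeGamma_parity by (cases x) fastforce

lemma qnorm_tildeGamma_neq_zero: "x \<in> tildeGamma p l \<Longrightarrow> qnorm x \<noteq> 0"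
  using qnorm_neq_zero[OF qre_tildeGamma_neq_zero] .

lemma qmult_in_tildeGamma:
  assumes "x \<in> tildeGamma p l" "y \<in> tildeGamma p l"
  shows "qmult x y \<in> tildeGamma p l"
proof -
  obtain x0 x1 x2 x3 where x: "x = (x0, x1, x2, x3)" by (cases x)
  obtain y0 y1 y2 y3 where y: "y = (y0, y1, y2, y3)" by (cases y)
  obtain z0 z1 z2 z3 where z: "qmult x y = (z0, z1, z2, z3)" by (cases "qmult x y")
  obtain r s r' s' where "qnorm x = int p ^ r * int l ^ s" "qnorm y = int p ^ r' * int l ^ s'"
    using qnorm_tildeGamma assms by metis
  then have "qnorm (qmult x y) = int p ^ (r + r') * int l ^ (s + s')"
    by (simp add: qnorm_qmult power_add ac_simps)
  moreover have "qnorm (qmult x y) mod 4 = (qnorm x mod 4) * (qnorm y mod 4) mod 4"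
    by (simp add: qnorm_qmult mod_mult_eq)
  moreover have "z0 = x0*y0 - x1*y1 - x2*y2 - x3*y3" "z1 = x0*y1 + x1*y0 + x2*y3 - x3*y2"
    "z2 = x0*y2 - x1*y3 + x2*y0 + x3*y1" "z3 = x0*y3 + x1*y2 - x2*y1 + x3*y0"
    using z unfolding x y by auto
  moreover note tildeGamma_parity[OF assms(1)[unfolded x]] tildeGamma_parity[OF assms(2)[unfolded y]]
  ultimately have "qnorm (z0, z1, z2, z3) = int p ^ (r + r') * int l ^ (s + s')"
    "qnorm (z0, z1, z2, z3) mod 4 = 1 \<longrightarrow> odd z0 \<and> even z1 \<and> even z2 \<and> even z3"
    "qnorm (z0, z1, z2, z3) mod 4 = 3 \<longrightarrow> even z1 \<and> odd z0 \<and> odd z2 \<and> odd z3"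
    unfolding z x y by (auto simp del: qnorm.simps)
  then show ?thesis
    unfolding z tildeGamma_def by blast
qed

end

fun psi_smat :: "(nat \<Rightarrow> rat) \<Rightarrow> (nat \<Rightarrow> rat) \<Rightarrow> quat \<Rightarrow> smat" where
  "psi_smat C D (x0, x1, x2, x3) =
     (\<lambda>n. of_int x0 + of_int x1 * C n + of_int x3 * D n,
      \<lambda>n. - (of_int x1 * D n) + of_int x2 + of_int x3 * C n,
      \<lambda>n. - (of_int x1 * D n) - of_int x2 + of_int x3 * C n,
      \<lambda>n. of_int x0 - of_int x1 * C n - of_int x3 * D n)"

lemma psi_smat_qscale: "psi_smat C D (qscale m x) = smat_scale (\<lambda>n. of_int m) (psi_smat C D x)"
  by (cases x) (simp add: algebra_simps)

locale Qp_splitting = padic +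
  fixes c d :: qp
  assumes c: "c \<in> Qp p" and d: "d \<in> Qp p"
    and sum_squares: "qp_add p (qp_add p (qp_mul p c c) (qp_mul p d d)) (qp_one p) = qp_zero p"
begin

abbreviation C where "C \<equiv> qp_rep c"
abbreviation D where "D \<equiv> qp_rep d"

definition E :: "nat \<Rightarrow> rat" where
  "E = (\<lambda>n. C n * C n + D n * D n + 1)"

lemma pcauchy_C: "pcauchy p C" and pcauchy_D: "pcauchy p D"
  using Qp_rep c d by blast+

lemma qp_cls_C: "qp_cls p C = c" and qp_cls_D: "qp_cls p D = d"
  using Qp_rep c d by blast+

lemma pnull_E: "pnull p E"
proof -
  have "qp_cls p E =
          qp_add p (qp_add p (qp_mul p (qp_cls p C) (qp_cls p C)) (qp_mul p (qp_cls p D) (qp_cls p D)))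
            (qp_one p)"
    using pcauchy_C pcauchy_D
    by (simp add: E_def qp_one_cls qp_add_cls qp_mul_cls pcauchy_add pcauchy_mult pcauchy_const)
  then have "qp_cls p E = qp_zero p"
    using sum_squares unfolding qp_cls_C qp_cls_D by simp
  moreover have "pcauchy p E"
    unfolding E_def by (intro pcauchy_add pcauchy_mult pcauchy_C pcauchy_D pcauchy_const)
  ultimately show ?thesis by (simp add: qp_cls_eq_zero_iff)
qed

lemma pnull_const_mult_E: "pnull p (\<lambda>n. k * E n)"
  using pnull_mult_left[OF pcauchy_const pnull_E] .

lemma smat_cauchy_psi_smat: "smat_cauchy p (psi_smat C D x)"
  using pcauchy_C pcauchy_D
  by (cases x) (simp add: pcauchy_add pcauchy_mult pcauchy_diff pcauchy_uminus pcauchy_const)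

lemma psi_mat_eq_smat_cls: "psi_mat p c d x = smat_cls p (psi_smat C D x)"
proof -
  have "psi_mat p c d x = psi_mat p (qp_cls p C) (qp_cls p D) x"
    by (simp only: qp_cls_C qp_cls_D)
  also have "\<dots> = smat_cls p (psi_smat C D x)"
    using pcauchy_C pcauchy_D
    by (cases x) (simp add: Let_def qp_of_int_def qp_add_cls qp_mul_cls qp_neg_cls qp_sub_cls
        pcauchy_add pcauchy_mult pcauchy_diff pcauchy_uminus pcauchy_const)
  finally show ?thesis .
qed

text \<open>The entries of the two sides differ by integer multiples of \<open>E\<close>; this is where
  \<open>c\<^sup>2 + d\<^sup>2 + 1 = 0\<close> enters.\<close>
lemma smat_equiv_psi_smat_mul:
  "smat_equiv p (smat_mul (psi_smat C D x) (psi_smat C D y)) (psi_smat C D (qmult x y))"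
proof -
  obtain x0 x1 x2 x3 where x: "x = (x0, x1, x2, x3)" by (cases x)
  obtain y0 y1 y2 y3 where y: "y = (y0, y1, y2, y3)" by (cases y)
  define a b where "a = (of_int (x1*y1 + x3*y3) :: rat)" and "b = (of_int (x1*y3 - x3*y1) :: rat)"
  have "pnull p (\<lambda>n. a * E n)" "pnull p (\<lambda>n. b * E n)" "pnull p (\<lambda>n. (- b) * E n)"
    by (rule pnull_const_mult_E)+
  then show ?thesis
    unfolding x y a_def b_def E_def by (simp add: algebra_simps)
qed

lemma smat_det_psi_smat:
  "smat_det (psi_smat C D (x0, x1, x2, x3)) =
     (\<lambda>n. of_int (qnorm (x0, x1, x2, x3)) - of_int (x1 * x1 + x3 * x3) * E n)"
  unfolding E_def by (simp add: algebra_simps power2_eq_square)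

lemma psi_mat_in_GL2:
  assumes "qnorm x \<noteq> 0"
  shows "psi_mat p c d x \<in> GL2 p"
proof -
  obtain x0 x1 x2 x3 where x: "x = (x0, x1, x2, x3)" by (cases x)
  have "\<not> pnull p (smat_det (psi_smat C D x))"
  proof
    assume "pnull p (smat_det (psi_smat C D x))"
    then have "pnull p (\<lambda>n. smat_det (psi_smat C D x) n + of_int (x1 * x1 + x3 * x3) * E n)"
      by (intro pnull_add pnull_const_mult_E)
    then have "pnull p (\<lambda>n. of_int (qnorm x))"
      unfolding x smat_det_psi_smat by simp
    with assms show False by simp
  qed
  then show ?thesis
    unfolding psi_mat_eq_smat_cls by (simp add: smat_cls_in_GL2_iff smat_cauchy_psi_smat)
qed

lemma psi_mat_qmult:
  "m2_mul p (psi_mat p c d x) (psi_mat p c d y) = psi_mat p c d (qmult x y)"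
  unfolding psi_mat_eq_smat_cls
  using smat_equiv_psi_smat_mul
  by (simp add: m2_mul_smat_cls smat_cls_eq_iff smat_cauchy_mul smat_cauchy_psi_smat)

lemma pgl_cls_psi_mat_qmult:
  assumes "qnorm x \<noteq> 0" "qnorm y \<noteq> 0"
  shows "pgl_mul p (pgl_cls p (psi_mat p c d x)) (pgl_cls p (psi_mat p c d y)) =
           pgl_cls p (psi_mat p c d (qmult x y))"
  using assms by (simp add: pgl_mul_cls psi_mat_in_GL2 psi_mat_qmult)

lemma psi_mat_one: "psi_mat p c d (1, 0, 0, 0) = (qp_one p, qp_zero p, qp_zero p, qp_one p)"
  unfolding psi_mat_eq_smat_cls by (simp add: qp_one_def qp_zero_def qp_of_int_def)

lemma psi_mat_qscale: "psi_mat p c d (qscale m x) = m2_scale p (qp_of_int p m) (psi_mat p c d x)"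
  unfolding psi_mat_eq_smat_cls psi_smat_qscale qp_of_int_def
  by (simp add: m2_scale_smat_cls pcauchy_const smat_cauchy_psi_smat)

lemma pgl_cls_psi_mat_eq_if_qproportional:
  assumes "qproportional x y" "qre x \<noteq> 0" "qre y \<noteq> 0"
  shows "pgl_cls p (psi_mat p c d x) = pgl_cls p (psi_mat p c d y)"
proof -
  have "pgl_cls p (psi_mat p c d x) = pgl_cls p (psi_mat p c d (qscale (qre y) x))"
    using assms(2,3) by (simp add: psi_mat_qscale pgl_cls_scale qp_of_int_in_Qp psi_mat_in_GL2 qnorm_neq_zero)
  also have "\<dots> = pgl_cls p (psi_mat p c d (qscale (qre x) y))"
    using assms(1) by (simp add: qscale_qre_if_qproportional)
  also have "\<dots> = pgl_cls p (psi_mat p c d y)"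
    using assms(2,3) by (simp add: psi_mat_qscale pgl_cls_scale qp_of_int_in_Qp psi_mat_in_GL2 qnorm_neq_zero)
  finally show ?thesis .
qed

text \<open>The entries yield the combinations \<open>f\<^sub>1 C + f\<^sub>3 D\<close> and \<open>f\<^sub>3 C - f\<^sub>1 D\<close> of the differences
  \<open>f\<^sub>i = x\<^sub>i - T y\<^sub>i\<close>; multiplying them by \<open>C\<close>, \<open>D\<close> and using \<open>C\<^sup>2 + D\<^sup>2 = E - 1\<close> isolates \<open>f\<^sub>1\<close>
  and \<open>f\<^sub>3\<close>.\<close>
lemma pnull_coordinates_if_smat_equiv_psi_smat:
  assumes T: "pcauchy p T"
    and equiv: "smat_equiv p (psi_smat C D (x0, x1, x2, x3)) (smat_scale T (psi_smat C D (y0, y1, y2, y3)))"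
  shows "pnull p (\<lambda>n. of_int x0 - T n * of_int y0)" "pnull p (\<lambda>n. of_int x1 - T n * of_int y1)"
    "pnull p (\<lambda>n. of_int x2 - T n * of_int y2)" "pnull p (\<lambda>n. of_int x3 - T n * of_int y3)"
proof -
  define f where "f u v n = of_int u - T n * of_int v" for u v :: int and n
  have pcauchy_f: "pcauchy p (f u v)" for u v
    unfolding f_def by (intro pcauchy_diff pcauchy_mult pcauchy_const T)
  have half: "pcauchy p (\<lambda>n. 1 / 2)" "pcauchy p (\<lambda>n. - (1 / 2))"
    by (rule pcauchy_const)+
  from equiv have h:
    "pnull p (\<lambda>n. f x0 y0 n + f x1 y1 n * C n + f x3 y3 n * D n)"
    "pnull p (\<lambda>n. f x2 y2 n - f x1 y1 n * D n + f x3 y3 n * C n)"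
    "pnull p (\<lambda>n. - f x2 y2 n - f x1 y1 n * D n + f x3 y3 n * C n)"
    "pnull p (\<lambda>n. f x0 y0 n - f x1 y1 n * C n - f x3 y3 n * D n)"
    by (simp_all add: f_def algebra_simps)
  show "pnull p (f x0 y0)"
    by (rule pnull_lincomb[OF h(1) h(4) half(1) half(1)]) (simp add: f_def field_simps)
  show "pnull p (f x2 y2)"
    by (rule pnull_lincomb[OF h(2) h(3) half(1) half(2)]) (simp add: f_def field_simps)
  have g: "pnull p (\<lambda>n. f x1 y1 n * C n + f x3 y3 n * D n)"
    by (rule pnull_lincomb[OF h(1) h(4) half(1) half(2)]) (simp add: f_def field_simps)
  have k: "pnull p (\<lambda>n. f x3 y3 n * C n - f x1 y1 n * D n)"
    by (rule pnull_lincomb[OF h(2) h(3) half(1) half(1)]) (simp add: f_def field_simps)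
  have C': "pcauchy p (\<lambda>n. - C n)" and D': "pcauchy p (\<lambda>n. - D n)"
    using pcauchy_C pcauchy_D by (simp_all add: pcauchy_uminus)
  have "pnull p (\<lambda>n. - C n * (f x1 y1 n * C n + f x3 y3 n * D n) + D n * (f x3 y3 n * C n - f x1 y1 n * D n))"
    by (rule pnull_lincomb[OF g k C' pcauchy_D]) simp
  then show "pnull p (f x1 y1)"
    by (rule pnull_lincomb[OF pnull_E _ pcauchy_f[of x1 y1] pcauchy_const[of p 1]]) (simp add: E_def algebra_simps)
  have "pnull p (\<lambda>n. - D n * (f x1 y1 n * C n + f x3 y3 n * D n) - C n * (f x3 y3 n * C n - f x1 y1 n * D n))"
    by (rule pnull_lincomb[OF g k D' C']) simp
  then show "pnull p (f x3 y3)"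
    by (rule pnull_lincomb[OF pnull_E _ pcauchy_f[of x3 y3] pcauchy_const[of p 1]]) (simp add: E_def algebra_simps)
qed

lemma qproportional_if_pgl_cls_psi_mat_eq:
  assumes "qnorm x \<noteq> 0" "pgl_cls p (psi_mat p c d x) = pgl_cls p (psi_mat p c d y)"
  shows "qproportional x y"
proof -
  obtain x0 x1 x2 x3 where x: "x = (x0, x1, x2, x3)" by (cases x)
  obtain y0 y1 y2 y3 where y: "y = (y0, y1, y2, y3)" by (cases y)
  obtain t where t: "t \<in> Qp p" "psi_mat p c d x = m2_scale p t (psi_mat p c d y)"
    using pgl_cls_eqD[OF psi_mat_in_GL2[OF assms(1)] assms(2)] by blast
  obtain T where T: "pcauchy p T" "t = qp_cls p T"
    using t(1) by (rule QpE)
  have "smat_equiv p (psi_smat C D x) (smat_scale T (psi_smat C D y))"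
    using t(2) T unfolding psi_mat_eq_smat_cls
    by (simp add: m2_scale_smat_cls smat_cls_eq_iff smat_cauchy_psi_smat smat_cauchy_scale)
  note coords = pnull_coordinates_if_smat_equiv_psi_smat[OF T(1) this[unfolded x y]]
  have "y0 * u = x0 * v" if "pnull p (\<lambda>n. of_int u - T n * of_int v)" for u v
  proof -
    have "pnull p (\<lambda>n. of_int (y0 * u - x0 * v))"
      by (rule pnull_lincomb[OF that coords(1) pcauchy_const pcauchy_const, of _ "of_int y0" "- of_int v"])
         (simp add: algebra_simps)
    then have "y0 * u - x0 * v = 0"
      unfolding pnull_const_iff by (simp only: of_int_eq_0_iff)
    then show ?thesis by simp
  qed
  with coords show ?thesis
    unfolding x y by simp
qed

end

section \<open>A criterion for CSA groups\<close>

definition centralizer :: "('a, 'b) monoid_scheme \<Rightarrow> 'a \<Rightarrow> 'a set" where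
  "centralizer G a = {x \<in> carrier G. x \<otimes>\<^bsub>G\<^esub> a = a \<otimes>\<^bsub>G\<^esub> x}"

lemma (in group) subgroup_centralizer:
  assumes a: "a \<in> carrier G"
  shows "subgroup (centralizer G a) G"
proof (rule subgroupI)
  show "centralizer G a \<subseteq> carrier G" "centralizer G a \<noteq> {}"
    using a by (auto simp: centralizer_def)
next
  fix x
  assume "x \<in> centralizer G a"
  then have x: "x \<in> carrier G" "x \<otimes> a = a \<otimes> x"
    by (simp_all add: centralizer_def)
  then have "inv x \<otimes> a = inv x \<otimes> (a \<otimes> x) \<otimes> inv x"
    using a by (simp add: m_assoc)
  also have "\<dots> = a \<otimes> inv x"
    using a x by (simp flip: x(2) add: m_assoc[symmetric])
  finally show "inv x \<in> centralizer G a"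
    using x by (simp add: centralizer_def)
next
  fix x y
  assume "x \<in> centralizer G a" "y \<in> centralizer G a"
  then show "x \<otimes> y \<in> centralizer G a"
    using a by (simp add: centralizer_def m_assoc) (metis m_assoc)
qed

lemma (in group) CSA_group_if_centralizers_abelian:
  assumes abelian: "\<And>a. a \<in> carrier G \<Longrightarrow> a \<noteq> \<one> \<Longrightarrow> abelian_set G (centralizer G a)"
    and conj: "\<And>a g. a \<in> carrier G \<Longrightarrow> g \<in> carrier G \<Longrightarrow>
                  g \<otimes> a \<otimes> inv g \<in> centralizer G a \<Longrightarrow> g \<in> centralizer G a"
  shows "CSA_group G"
  unfolding CSA_group_def malnormal_def
proof (intro allI impI ballI)
  fix A g
  assume max: "maximal_abelian_subgroup A G" and g: "g \<in> carrier G - A"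
  then have A: "subgroup A G" "abelian_set G A"
    by (simp_all add: maximal_abelian_subgroup_def)
  have trivial: "g \<otimes> a \<otimes> inv g = \<one>" if a: "a \<in> A" "g \<otimes> a \<otimes> inv g \<in> A" for a
  proof (cases "a = \<one>")
    case False
    have a_carrier: "a \<in> carrier G"
      using A(1) a(1) by (rule subgroup.mem_carrier)
    have "A \<subseteq> centralizer G a"
      using A a(1) subgroup.subset unfolding abelian_set_def centralizer_def by blast
    moreover have "subgroup (centralizer G a) G" "abelian_set G (centralizer G a)"
      using subgroup_centralizer[OF a_carrier] abelian[OF a_carrier False] .
    ultimately have "centralizer G a = A"
      using max unfolding maximal_abelian_subgroup_def by blast
    then have "g \<in> A"
      using conj[OF a_carrier, of g] a(2) g by simp
    with g show ?thesis
      by simp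
  qed (use g in simp)
  have "\<one> = g \<otimes> \<one> \<otimes> inv g" "\<one> \<in> A"
    using g A(1) by (simp_all add: subgroup.one_closed)
  then have "\<one> \<in> {g \<otimes> a \<otimes> inv g |a. a \<in> A} \<inter> A"
    by blast
  with trivial show "{g \<otimes> a \<otimes> inv g |a. a \<in> A} \<inter> A = {\<one>}"
    by blast
qed

section \<open>The lattice \<open>\<Gamma>\<close>\<close>

declare psi_mat.simps [simp del] qnorm.simps [simp del]

locale Gamma_lattice = odd_moduli p l + P: Qp_splitting p cp dp + L: Qp_splitting l cl dl
  for p l cp dp cl dl
begin

abbreviation \<Gamma> where "\<Gamma> \<equiv> Gamma_grp p l cp dp cl dl"
abbreviation \<Psi> where "\<Psi> \<equiv> psi p l cp dp cl dl"

lemma carrier_Gamma: "carrier \<Gamma> = \<Psi> ` tildeGamma p l"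
  by (simp add: Gamma_grp_def)

lemma one_Gamma: "\<one>\<^bsub>\<Gamma>\<^esub> = \<Psi> (1, 0, 0, 0)"
  by (simp add: Gamma_grp_def G_grp_def psi_def P.psi_mat_one L.psi_mat_one pgl_one_def)

lemma mult_Gamma:
  "x \<in> tildeGamma p l \<Longrightarrow> y \<in> tildeGamma p l \<Longrightarrow> \<Psi> x \<otimes>\<^bsub>\<Gamma>\<^esub> \<Psi> y = \<Psi> (qmult x y)"
  by (simp add: Gamma_grp_def G_grp_def psi_def P.pgl_cls_psi_mat_qmult L.pgl_cls_psi_mat_qmult
      qnorm_tildeGamma_neq_zero)

lemma psi_eq_iff:
  assumes "qre x \<noteq> 0" "qre y \<noteq> 0"
  shows "\<Psi> x = \<Psi> y \<longleftrightarrow> qproportional x y"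
  using P.qproportional_if_pgl_cls_psi_mat_eq[OF qnorm_neq_zero[OF assms(1)]]
    P.pgl_cls_psi_mat_eq_if_qproportional[OF _ assms] L.pgl_cls_psi_mat_eq_if_qproportional[OF _ assms]
  unfolding psi_def by blast

lemma psi_real: "r \<noteq> 0 \<Longrightarrow> \<Psi> (r, 0, 0, 0) = \<one>\<^bsub>\<Gamma>\<^esub>"
  by (simp add: one_Gamma psi_eq_iff)

lemma group_Gamma: "group \<Gamma>"
proof (rule groupI)
  show "\<one>\<^bsub>\<Gamma>\<^esub> \<in> carrier \<Gamma>"
    by (simp add: one_Gamma carrier_Gamma one_in_tildeGamma)
next
  fix a b
  assume "a \<in> carrier \<Gamma>" "b \<in> carrier \<Gamma>"
  then obtain x y where "x \<in> tildeGamma p l" "a = \<Psi> x" "y \<in> tildeGamma p l" "b = \<Psi> y"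
    unfolding carrier_Gamma by blast
  then show "a \<otimes>\<^bsub>\<Gamma>\<^esub> b \<in> carrier \<Gamma>"
    by (simp add: carrier_Gamma mult_Gamma qmult_in_tildeGamma)
next
  fix a b c
  assume "a \<in> carrier \<Gamma>" "b \<in> carrier \<Gamma>" "c \<in> carrier \<Gamma>"
  then obtain x y z where "x \<in> tildeGamma p l" "a = \<Psi> x" "y \<in> tildeGamma p l" "b = \<Psi> y"
      "z \<in> tildeGamma p l" "c = \<Psi> z"
    unfolding carrier_Gamma by blast
  then show "a \<otimes>\<^bsub>\<Gamma>\<^esub> b \<otimes>\<^bsub>\<Gamma>\<^esub> c = a \<otimes>\<^bsub>\<Gamma>\<^esub> (b \<otimes>\<^bsub>\<Gamma>\<^esub> c)"
    by (simp add: mult_Gamma qmult_in_tildeGamma qmult_assoc)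
next
  fix a
  assume "a \<in> carrier \<Gamma>"
  then obtain x where x: "x \<in> tildeGamma p l" "a = \<Psi> x"
    unfolding carrier_Gamma by blast
  then show "\<one>\<^bsub>\<Gamma>\<^esub> \<otimes>\<^bsub>\<Gamma>\<^esub> a = a"
    by (simp add: one_Gamma mult_Gamma one_in_tildeGamma qmult_one)
  have "\<Psi> (qcnj x) \<otimes>\<^bsub>\<Gamma>\<^esub> a = \<one>\<^bsub>\<Gamma>\<^esub>"
    using x by (simp add: mult_Gamma qcnj_in_tildeGamma qmult_qcnj psi_real qnorm_tildeGamma_neq_zero)
  moreover have "\<Psi> (qcnj x) \<in> carrier \<Gamma>"
    using x by (simp add: carrier_Gamma qcnj_in_tildeGamma)
  ultimately show "\<exists>b\<in>carrier \<Gamma>. b \<otimes>\<^bsub>\<Gamma>\<^esub> a = \<one>\<^bsub>\<Gamma>\<^esub>"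
    by blast
qed

lemma inv_Gamma: "x \<in> tildeGamma p l \<Longrightarrow> inv\<^bsub>\<Gamma>\<^esub> (\<Psi> x) = \<Psi> (qcnj x)"
  by (rule group.inv_equality[OF group_Gamma])
     (simp_all add: carrier_Gamma mult_Gamma qcnj_in_tildeGamma qmult_qcnj psi_real
       qnorm_tildeGamma_neq_zero)

lemma commute_Gamma_iff:
  assumes "x \<in> tildeGamma p l" "y \<in> tildeGamma p l"
  shows "\<Psi> x \<otimes>\<^bsub>\<Gamma>\<^esub> \<Psi> y = \<Psi> y \<otimes>\<^bsub>\<Gamma>\<^esub> \<Psi> x \<longleftrightarrow> qmult x y = qmult y x"
proof -
  have re: "qre (qmult x y) \<noteq> 0" "qre (qmult y x) \<noteq> 0"
    using assms by (simp_all add: qre_tildeGamma_neq_zero qmult_in_tildeGamma)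
  have "\<Psi> x \<otimes>\<^bsub>\<Gamma>\<^esub> \<Psi> y = \<Psi> y \<otimes>\<^bsub>\<Gamma>\<^esub> \<Psi> x \<longleftrightarrow> qproportional (qmult x y) (qmult y x)"
    using assms re by (simp add: mult_Gamma psi_eq_iff)
  also have "\<dots> \<longleftrightarrow> qmult x y = qmult y x"
    using qproportional_imp_eq[OF _ qre_qmult_commute re(1)] qproportional_refl by metis
  finally show ?thesis .
qed

lemma in_centralizer_Gamma_iff:
  "\<alpha> \<in> tildeGamma p l \<Longrightarrow> \<xi> \<in> tildeGamma p l \<Longrightarrow>
     \<Psi> \<xi> \<in> centralizer \<Gamma> (\<Psi> \<alpha>) \<longleftrightarrow> qmult \<xi> \<alpha> = qmult \<alpha> \<xi>"
  by (simp add: centralizer_def carrier_Gamma commute_Gamma_iff)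

lemma centralizer_Gamma_abelian:
  assumes "a \<in> carrier \<Gamma>" "a \<noteq> \<one>\<^bsub>\<Gamma>\<^esub>"
  shows "abelian_set \<Gamma> (centralizer \<Gamma> a)"
  unfolding abelian_set_def
proof (intro ballI)
  obtain \<alpha> where \<alpha>: "\<alpha> \<in> tildeGamma p l" "a = \<Psi> \<alpha>"
    using assms(1) unfolding carrier_Gamma by blast
  obtain a0 u1 u2 u3 where \<alpha>_eq: "\<alpha> = (a0, u1, u2, u3)"
    by (cases \<alpha>)
  have non_real: "(u1, u2, u3) \<noteq> (0, 0, 0)"
    using assms(2) \<alpha> qre_tildeGamma_neq_zero[OF \<alpha>(1)] psi_real unfolding \<alpha>_eq by auto
  fix x y
  assume "x \<in> centralizer \<Gamma> a" "y \<in> centralizer \<Gamma> a"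
  moreover from this obtain \<xi> \<eta> where "\<xi> \<in> tildeGamma p l" "x = \<Psi> \<xi>" "\<eta> \<in> tildeGamma p l" "y = \<Psi> \<eta>"
    unfolding centralizer_def carrier_Gamma by blast
  ultimately show "x \<otimes>\<^bsub>\<Gamma>\<^esub> y = y \<otimes>\<^bsub>\<Gamma>\<^esub> x"
    using \<alpha> qmult_commute_trans[OF _ _ \<alpha>_eq non_real]
    by (simp add: in_centralizer_Gamma_iff commute_Gamma_iff)
qed

lemma in_centralizer_Gamma_if_conj:
  assumes "a \<in> carrier \<Gamma>" "g \<in> carrier \<Gamma>" "g \<otimes>\<^bsub>\<Gamma>\<^esub> a \<otimes>\<^bsub>\<Gamma>\<^esub> inv\<^bsub>\<Gamma>\<^esub> g \<in> centralizer \<Gamma> a"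
  shows "g \<in> centralizer \<Gamma> a"
proof -
  obtain \<alpha> \<gamma> where \<alpha>\<gamma>: "\<alpha> \<in> tildeGamma p l" "a = \<Psi> \<alpha>" "\<gamma> \<in> tildeGamma p l" "g = \<Psi> \<gamma>"
    using assms(1,2) unfolding carrier_Gamma by blast
  define \<beta> where "\<beta> = qmult (qmult \<gamma> \<alpha>) (qcnj \<gamma>)"
  have \<beta>: "\<beta> \<in> tildeGamma p l"
    unfolding \<beta>_def using \<alpha>\<gamma> by (simp add: qmult_in_tildeGamma qcnj_in_tildeGamma)
  have "g \<otimes>\<^bsub>\<Gamma>\<^esub> a \<otimes>\<^bsub>\<Gamma>\<^esub> inv\<^bsub>\<Gamma>\<^esub> g = \<Psi> \<beta>"
    using \<alpha>\<gamma> unfolding \<beta>_def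
    by (simp add: inv_Gamma mult_Gamma qmult_in_tildeGamma qcnj_in_tildeGamma)
  then have "qmult \<beta> \<alpha> = qmult \<alpha> \<beta>"
    using assms(3) \<alpha>\<gamma> \<beta> by (simp add: in_centralizer_Gamma_iff)
  then have "qmult \<gamma> \<alpha> = qmult \<alpha> \<gamma>"
    unfolding \<beta>_def using qmult_commute_if_conj_commute qre_tildeGamma_neq_zero[OF \<alpha>\<gamma>(3)] by blast
  then show ?thesis
    using \<alpha>\<gamma> by (simp add: in_centralizer_Gamma_iff)
qed

end

theorem proposition2p6:
  fixes p l :: nat and cp dp cl dl :: qp
  assumes "prime p" and "prime l" and "odd p" and "odd l" and "p \<noteq> l"
    and "cp \<in> Qp p" and "dp \<in> Qp p"
    and "qp_add p (qp_add p (qp_mul p cp cp) (qp_mul p dp dp)) (qp_one p) = qp_zero p"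
    and "cl \<in> Qp l" and "dl \<in> Qp l"
    and "qp_add l (qp_add l (qp_mul l cl cl) (qp_mul l dl dl)) (qp_one l) = qp_zero l"
  shows "CSA_group (Gamma_grp p l cp dp cl dl)"
proof -
  interpret Gamma_lattice p l cp dp cl dl
    using assms by unfold_locales (simp_all add: padic_def)
  show ?thesis
    by (rule group.CSA_group_if_centralizers_abelian[OF group_Gamma
          centralizer_Gamma_abelian in_centralizer_Gamma_if_conj])
qed

end
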